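(* Let $l\in\mathbb{N}$, let $\mathcal{A},\mathcal{B}_1,\mathcal{B}_2,\mathcal{C}$ be finite sets, and let $p_{AB_1B_2C}=p_Ap_{B_1|A}p_{B_2|A}p_{C|B_1B_2}$ be a pmf on $\mathcal{A}\times\mathcal{B}_1\times\mathcal{B}_2\times\mathcal{C}$ such that $p_A$ is a type of sequences in $\mathcal{A}^l$. Let $u^l:[M_u]\to\mathcal{A}^l$ be a map such that $u^l(m)$ has type $p_A$ for every $m$, and let $(M_1,M_2)\in[M_u]\times[M_u]$ be random variables with an arbitrary joint pmf. Suppose $(A_1^l,A_2^l,B_1^l,B_2^l,C^l)$ has pmf $$p(a_1^l,a_2^l,b_1^l,b_2^l,c^l)=\Big[\sum_{m_1,m_2}P(M_1=m_1,M_2=m_2)\mathbf{1}\{u^l(m_1)=a_1^l,u^l(m_2)=a_2^l\}\Big]\prod_{i=1}^lp_{B_1|A}(b_{1i}|a_{1i})p_{B_2|A}(b_{2i}|a_{2i})p_{C|B_1B_2}(c_i|b_{1i},b_{2i}),$$ and let $I\in\{1,\dots,l\}$ be uniformly distributed and independent of $(A_1^l,A_2^l,B_1^l,B_2^l,C^l)$. Then for all $x,y_1,y_2,z$, $$P(A_{1I}=x,A_{2I}=x,B_{1I}=y_1,B_{2I}=y_2,C_I=z\mid A_1^l=A_2^l)=p_{AB_1B_2C}(x,y_1,y_2,z),$$ provided $P(A_1^l=A_2^l)>0$.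
   Context: A pmf $p_A$ on $\mathcal{A}$ is a type of sequences in $\mathcal{A}^l$ if $lp_A(a)$ is an integer for all $a$; a sequence $a^l$ has type $p_A$ if $\frac1l|\{i:a_i=a\}|=p_A(a)$ for all $a$. $A_{1I}$ denotes the $I$-th component of $A_1^l$, etc. *)

theory Defs
  imports Main "HOL-Library.FuncSet" Complex_Main
begin

text \<open>Sequences in A^l are lists of length l; positions are 0-based internally,
  so the paper's component i (1 \<le> i \<le> l) is list index i - 1.\<close>

definition seqs :: "nat \<Rightarrow> 'a list set" where
  "seqs l = {xs. length xs = l}"

definition is_type :: "nat \<Rightarrow> ('a \<Rightarrow> real) \<Rightarrow> bool" where
  "is_type l p \<longleftrightarrow> (\<forall>a. real l * p a \<in> \<int>)"

definition has_type :: "nat \<Rightarrow> ('a \<Rightarrow> real) \<Rightarrow> 'a list \<Rightarrow> bool" where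
  "has_type l p xs \<longleftrightarrow> length xs = l \<and>
     (\<forall>a. real (card {i. i < l \<and> xs ! i = a}) / real l = p a)"

definition seq_pmf ::
  "nat \<Rightarrow> nat \<Rightarrow> (nat \<Rightarrow> nat \<Rightarrow> real) \<Rightarrow> (nat \<Rightarrow> 'a list)
   \<Rightarrow> ('a \<Rightarrow> 'b1 \<Rightarrow> real) \<Rightarrow> ('a \<Rightarrow> 'b2 \<Rightarrow> real) \<Rightarrow> ('b1 \<Rightarrow> 'b2 \<Rightarrow> 'c \<Rightarrow> real)
   \<Rightarrow> 'a list \<Rightarrow> 'a list \<Rightarrow> 'b1 list \<Rightarrow> 'b2 list \<Rightarrow> 'c list \<Rightarrow> real" where
  "seq_pmf l Mu PM u pB1 pB2 pC a1 a2 b1 b2 c =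
     (\<Sum>m1\<in>{1..Mu}. \<Sum>m2\<in>{1..Mu}.
        PM m1 m2 * (if u m1 = a1 \<and> u m2 = a2 then 1 else 0)) *
     (\<Prod>i<l. pB1 (a1 ! i) (b1 ! i) * pB2 (a2 ! i) (b2 ! i) * pC (b1 ! i) (b2 ! i) (c ! i))"

definition prob_eq ::
  "nat \<Rightarrow> ('a list \<Rightarrow> 'a list \<Rightarrow> 'b1 list \<Rightarrow> 'b2 list \<Rightarrow> 'c list \<Rightarrow> real) \<Rightarrow> real" where
  "prob_eq l p =
     (\<Sum>a1\<in>seqs l. \<Sum>a2\<in>seqs l. \<Sum>b1\<in>seqs l. \<Sum>b2\<in>seqs l. \<Sum>c\<in>seqs l.
        (if a1 = a2 then p a1 a2 b1 b2 c else 0))"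

definition prob_joint_eq ::
  "nat \<Rightarrow> ('a list \<Rightarrow> 'a list \<Rightarrow> 'b1 list \<Rightarrow> 'b2 list \<Rightarrow> 'c list \<Rightarrow> real)
   \<Rightarrow> 'a \<Rightarrow> 'b1 \<Rightarrow> 'b2 \<Rightarrow> 'c \<Rightarrow> real" where
  "prob_joint_eq l p x y1 y2 z =
     (\<Sum>a1\<in>seqs l. \<Sum>a2\<in>seqs l. \<Sum>b1\<in>seqs l. \<Sum>b2\<in>seqs l. \<Sum>c\<in>seqs l. \<Sum>I\<in>{1..l}.
        (1 / real l) * p a1 a2 b1 b2 c *
        (if a1 ! (I - 1) = x \<and> a2 ! (I - 1) = x \<and> b1 ! (I - 1) = y1 \<and>
            b2 ! (I - 1) = y2 \<and> c ! (I - 1) = z \<and> a1 = a2 then 1 else 0))"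

end

theory Submission imports Defs begin

text \<open>Conditioned on \<open>A\<^sub>1\<^sup>l = A\<^sub>2\<^sup>l = a\<close>, the sequences \<open>B\<^sub>1\<^sup>l, B\<^sub>2\<^sup>l, C\<^sup>l\<close> are
  drawn letter by letter from the memoryless channel, and every letter of a codeword \<open>a\<close>
  has positive \<open>p\<^sub>A\<close>-probability because \<open>a\<close> has type \<open>p\<^sub>A\<close>. Hence the marginal of
  \<open>(B\<^sub>1\<^sub>j, B\<^sub>2\<^sub>j, C\<^sub>j)\<close> at a position \<open>j\<close> is the channel law given \<open>a\<^sub>j\<close>, the other
  positions summing out to 1. Averaging over a uniform position, the fraction of positions
  with \<open>a\<^sub>j = x\<close> is \<open>p\<^sub>A(x)\<close> for every codeword, so the conditional probability does not
  depend on the distribution of \<open>(M\<^sub>1, M\<^sub>2)\<close>.\<close>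

lemma finite_seqs: "finite (seqs l :: 'a::finite list set)"
proof -
  have "seqs l = {xs::'a list. set xs \<subseteq> UNIV \<and> length xs = l}" by (auto simp: seqs_def)
  then show ?thesis using finite_lists_length_eq[of "UNIV::'a set" l] by simp
qed

lemma seqs_Suc: "seqs (Suc l) = (\<lambda>(x, xs). x # xs) ` (UNIV \<times> seqs l)"
  by (auto simp: seqs_def length_Suc_conv image_iff)

lemma sum_seqs_prod:
  fixes f :: "nat \<Rightarrow> 'b::finite \<Rightarrow> 'r::comm_semiring_1"
  shows "(\<Sum>xs\<in>seqs l. \<Prod>i<l. f i (xs ! i)) = (\<Prod>i<l. \<Sum>b\<in>UNIV. f i b)"
proof (induction l arbitrary: f)
  case 0
  have seqs_0: "seqs 0 = {[]}" by (auto simp: seqs_def)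
  show ?case unfolding seqs_0 by simp
next
  case (Suc l)
  have inj: "inj_on (\<lambda>(x, xs). x # xs) (UNIV \<times> seqs l)" by (auto simp: inj_on_def)
  have "(\<Sum>xs\<in>seqs (Suc l). \<Prod>i<Suc l. f i (xs ! i))
      = (\<Sum>(x, xs)\<in>UNIV \<times> seqs l. \<Prod>i<Suc l. f i ((x # xs) ! i))"
    unfolding seqs_Suc by (subst sum.reindex[OF inj]) (simp add: case_prod_beta)
  also have "\<dots> = (\<Sum>x\<in>UNIV. \<Sum>xs\<in>seqs l. f 0 x * (\<Prod>i<l. f (Suc i) (xs ! i)))"
    by (simp only: sum.cartesian_product prod.lessThan_Suc_shift) (simp add: case_prod_beta)
  also have "\<dots> = (\<Sum>x\<in>UNIV. f 0 x * (\<Prod>i<l. \<Sum>b\<in>UNIV. f (Suc i) b))"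
    by (simp add: sum_distrib_left[symmetric] Suc.IH[of "\<lambda>i. f (Suc i)"])
  also have "\<dots> = (\<Prod>i<Suc l. \<Sum>b\<in>UNIV. f i b)"
    by (simp only: prod.lessThan_Suc_shift sum_distrib_right)
  finally show ?case .
qed

lemma sum_seqs3_prod:
  fixes F :: "nat \<Rightarrow> 'b1::finite \<Rightarrow> 'b2::finite \<Rightarrow> 'c::finite \<Rightarrow> 'r::comm_semiring_1"
  shows "(\<Sum>b1\<in>seqs l. \<Sum>b2\<in>seqs l. \<Sum>c\<in>seqs l. \<Prod>i<l. F i (b1 ! i) (b2 ! i) (c ! i))
       = (\<Prod>i<l. \<Sum>v\<in>UNIV. \<Sum>w\<in>UNIV. \<Sum>t\<in>UNIV. F i v w t)"
proof -
  have "(\<Sum>b1\<in>seqs l. \<Sum>b2\<in>seqs l. \<Sum>c\<in>seqs l. \<Prod>i<l. F i (b1 ! i) (b2 ! i) (c ! i))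
      = (\<Sum>b1\<in>seqs l. \<Sum>b2\<in>seqs l. \<Prod>i<l. \<Sum>t\<in>UNIV. F i (b1 ! i) (b2 ! i) t)"
    by (intro sum.cong refl) (rule sum_seqs_prod)
  also have "\<dots> = (\<Sum>b1\<in>seqs l. \<Prod>i<l. \<Sum>w\<in>UNIV. \<Sum>t\<in>UNIV. F i (b1 ! i) w t)"
    by (intro sum.cong refl) (rule sum_seqs_prod[where f = "\<lambda>i w. \<Sum>t\<in>UNIV. F i (_ ! i) w t"])
  also have "\<dots> = (\<Prod>i<l. \<Sum>v\<in>UNIV. \<Sum>w\<in>UNIV. \<Sum>t\<in>UNIV. F i v w t)"
    by (rule sum_seqs_prod[where f = "\<lambda>i v. \<Sum>w\<in>UNIV. \<Sum>t\<in>UNIV. F i v w t"])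
  finally show ?thesis .
qed

lemma sum_seqs3_prod_marginal:
  fixes F :: "nat \<Rightarrow> 'b1::finite \<Rightarrow> 'b2::finite \<Rightarrow> 'c::finite \<Rightarrow> 'r::comm_semiring_1"
  assumes mass: "\<And>i. i < l \<Longrightarrow> i \<noteq> j \<Longrightarrow> (\<Sum>v\<in>UNIV. \<Sum>w\<in>UNIV. \<Sum>t\<in>UNIV. F i v w t) = 1"
    and j: "j < l"
  shows "(\<Sum>b1\<in>seqs l. \<Sum>b2\<in>seqs l. \<Sum>c\<in>seqs l.
            (\<Prod>i<l. F i (b1 ! i) (b2 ! i) (c ! i)) *
            (if b1 ! j = y1 \<and> b2 ! j = y2 \<and> c ! j = z then 1 else 0))
       = F j y1 y2 z"
proof -
  \<comment> \<open>absorb the indicator into the \<open>j\<close>-th factor\<close>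
  define G where "G i v w t = F i v w t *
      (if i = j then (if v = y1 \<and> w = y2 \<and> t = z then 1 else 0) else 1)" for i v w t
  have absorb: "(\<Prod>i<l. F i (b1 ! i) (b2 ! i) (c ! i)) *
                  (if b1 ! j = y1 \<and> b2 ! j = y2 \<and> c ! j = z then 1 else 0)
              = (\<Prod>i<l. G i (b1 ! i) (b2 ! i) (c ! i))" for b1 b2 c
  proof -
    have "(\<Prod>i<l. G i (b1 ! i) (b2 ! i) (c ! i)) = (\<Prod>i<l. F i (b1 ! i) (b2 ! i) (c ! i)) *
        (\<Prod>i<l. if i = j then (if b1 ! i = y1 \<and> b2 ! i = y2 \<and> c ! i = z then 1 else 0) else 1)"
      unfolding G_def by (rule prod.distrib)
    also have "(\<Prod>i<l. if i = j then (if b1 ! i = y1 \<and> b2 ! i = y2 \<and> c ! i = z then 1 else 0) else 1)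
        = (if b1 ! j = y1 \<and> b2 ! j = y2 \<and> c ! j = z then 1 else 0)"
      using j by (subst prod.delta) auto
    finally show ?thesis by simp
  qed
  have "(\<Prod>i<l. \<Sum>v\<in>UNIV. \<Sum>w\<in>UNIV. \<Sum>t\<in>UNIV. G i v w t)
      = (\<Sum>v\<in>UNIV. \<Sum>w\<in>UNIV. \<Sum>t\<in>UNIV. G j v w t) *
        (\<Prod>i\<in>{..<l} - {j}. \<Sum>v\<in>UNIV. \<Sum>w\<in>UNIV. \<Sum>t\<in>UNIV. G i v w t)"
    using j by (subst prod.remove[of _ j]) auto
  also have "(\<Prod>i\<in>{..<l} - {j}. \<Sum>v\<in>UNIV. \<Sum>w\<in>UNIV. \<Sum>t\<in>UNIV. G i v w t) = 1"
    by (rule prod.neutral) (auto simp: G_def mass)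
  also have "(\<Sum>v\<in>UNIV. \<Sum>w\<in>UNIV. \<Sum>t\<in>UNIV. G j v w t) = F j y1 y2 z"
  proof -
    have "G j v w t = (if t = z then (if w = y2 then (if v = y1 then F j y1 y2 z else 0) else 0) else 0)"
      for v w t
      by (auto simp: G_def)
    then show ?thesis by simp
  qed
  finally show ?thesis by (simp add: absorb sum_seqs3_prod)
qed

lemma has_type_count:
  assumes "has_type l p a"
  shows "real (card {j. j < l \<and> a ! j = x}) = real l * p x"
proof (cases "l = 0")
  case False
  moreover have "real (card {j. j < l \<and> a ! j = x}) / real l = p x"
    using assms by (simp add: has_type_def)
  ultimately show ?thesis by (simp add: field_simps)
qed simp

lemma has_type_letter_pos:
  assumes "has_type l p a" and "i < l"
  shows "p (a ! i) > 0"
proof -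
  have "card {j. j < l \<and> a ! j = a ! i} > 0"
    using assms(2) by (subst card_gt_0_iff) auto
  then have "real l * p (a ! i) > 0"
    using has_type_count[OF assms(1), of "a ! i"] by simp
  then show ?thesis by (simp add: zero_less_mult_iff)
qed

definition channel_mass ::
  "('a \<Rightarrow> 'b1 \<Rightarrow> real) \<Rightarrow> ('a \<Rightarrow> 'b2 \<Rightarrow> real) \<Rightarrow> ('b1 \<Rightarrow> 'b2 \<Rightarrow> 'c \<Rightarrow> real) \<Rightarrow> 'a \<Rightarrow> real" where
  "channel_mass pB1 pB2 pC a = (\<Sum>v\<in>UNIV. \<Sum>w\<in>UNIV. \<Sum>t\<in>UNIV. pB1 a v * pB2 a w * pC v w t)"

lemma channel_mass_eq_one:
  fixes pA :: "'a::finite \<Rightarrow> real" and pB1 :: "'a \<Rightarrow> 'b1::finite \<Rightarrow> real"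
    and pB2 :: "'a \<Rightarrow> 'b2::finite \<Rightarrow> real" and pC :: "'b1 \<Rightarrow> 'b2 \<Rightarrow> 'c::finite \<Rightarrow> real"
  assumes pA_nonneg: "\<forall>a. pA a \<ge> 0"
    and pB1_nonneg: "\<forall>a b. pB1 a b \<ge> 0"
    and pB1_sum: "\<forall>a. pA a > 0 \<longrightarrow> (\<Sum>b\<in>UNIV. pB1 a b) = 1"
    and pB2_nonneg: "\<forall>a b. pB2 a b \<ge> 0"
    and pB2_sum: "\<forall>a. pA a > 0 \<longrightarrow> (\<Sum>b\<in>UNIV. pB2 a b) = 1"
    and pC_sum: "\<forall>b1 b2. (\<Sum>a\<in>UNIV. pA a * pB1 a b1 * pB2 a b2) > 0
                   \<longrightarrow> (\<Sum>c\<in>UNIV. pC b1 b2 c) = 1"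
    and x: "pA x > 0"
  shows "channel_mass pB1 pB2 pC x = 1"
proof -
  \<comment> \<open>\<open>p\<^sub>C(\<cdot>|v,w)\<close> is only normalised where \<open>(v,w)\<close> has positive probability\<close>
  have sum_pC: "(\<Sum>t\<in>UNIV. pB1 x v * pB2 x w * pC v w t) = pB1 x v * pB2 x w" for v w
  proof (cases "pB1 x v * pB2 x w = 0")
    case False
    then have "pB1 x v * pB2 x w > 0"
      using pB1_nonneg pB2_nonneg by (metis less_eq_real_def mult_nonneg_nonneg)
    then have "pA x * pB1 x v * pB2 x w > 0" using x by (simp add: mult.assoc)
    moreover have "pA x * pB1 x v * pB2 x w \<le> (\<Sum>a\<in>UNIV. pA a * pB1 a v * pB2 a w)"
      by (rule member_le_sum) (use pA_nonneg pB1_nonneg pB2_nonneg in auto)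
    ultimately have "(\<Sum>t\<in>UNIV. pC v w t) = 1" using pC_sum by force
    then show ?thesis by (simp add: sum_distrib_left[symmetric])
  qed auto
  have "channel_mass pB1 pB2 pC x = (\<Sum>v\<in>UNIV. pB1 x v) * (\<Sum>w\<in>UNIV. pB2 x w)"
    by (simp add: channel_mass_def sum_pC sum_product)
  then show ?thesis using pB1_sum pB2_sum x by simp
qed

definition diag_weight :: "nat \<Rightarrow> (nat \<Rightarrow> nat \<Rightarrow> real) \<Rightarrow> (nat \<Rightarrow> 'a list) \<Rightarrow> 'a list \<Rightarrow> real" where
  "diag_weight Mu PM u a =
     (\<Sum>m1\<in>{1..Mu}. \<Sum>m2\<in>{1..Mu}. PM m1 m2 * (if u m1 = a \<and> u m2 = a then 1 else 0))"

lemma diag_weight_nonzero_codeword: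
  assumes "diag_weight Mu PM u a \<noteq> 0"
  obtains m where "m \<in> {1..Mu}" and "u m = a"
proof -
  have "\<exists>m\<in>{1..Mu}. u m = a"
  proof (rule ccontr)
    assume "\<not> (\<exists>m\<in>{1..Mu}. u m = a)"
    then have "diag_weight Mu PM u a = 0"
      by (auto simp: diag_weight_def intro!: sum.neutral)
    with assms show False by simp
  qed
  then show thesis using that by blast
qed

lemma seq_pmf_diag:
  "seq_pmf l Mu PM u pB1 pB2 pC a a b1 b2 c =
     diag_weight Mu PM u a *
     (\<Prod>i<l. pB1 (a ! i) (b1 ! i) * pB2 (a ! i) (b2 ! i) * pC (b1 ! i) (b2 ! i) (c ! i))"
  by (simp add: seq_pmf_def diag_weight_def)

lemma sum_seq_pmf_diag:
  fixes pB1 :: "'a \<Rightarrow> 'b1::finite \<Rightarrow> real" and pB2 :: "'a \<Rightarrow> 'b2::finite \<Rightarrow> real"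
    and pC :: "'b1 \<Rightarrow> 'b2 \<Rightarrow> 'c::finite \<Rightarrow> real"
  assumes mass: "\<And>i. i < l \<Longrightarrow> channel_mass pB1 pB2 pC (a ! i) = 1"
  shows "(\<Sum>b1\<in>seqs l. \<Sum>b2\<in>seqs l. \<Sum>c\<in>seqs l. seq_pmf l Mu PM u pB1 pB2 pC a a b1 b2 c)
       = diag_weight Mu PM u a"
proof -
  have "(\<Sum>b1\<in>seqs l. \<Sum>b2\<in>seqs l. \<Sum>c\<in>seqs l. seq_pmf l Mu PM u pB1 pB2 pC a a b1 b2 c)
      = diag_weight Mu PM u a * (\<Sum>b1\<in>seqs l. \<Sum>b2\<in>seqs l. \<Sum>c\<in>seqs l.
          \<Prod>i<l. pB1 (a ! i) (b1 ! i) * pB2 (a ! i) (b2 ! i) * pC (b1 ! i) (b2 ! i) (c ! i))"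
    by (simp only: seq_pmf_diag sum_distrib_left)
  also have "\<dots> = diag_weight Mu PM u a * (\<Prod>i<l. channel_mass pB1 pB2 pC (a ! i))"
    using sum_seqs3_prod[where F = "\<lambda>i v w t. pB1 (a ! i) v * pB2 (a ! i) w * pC v w t"]
    by (simp add: channel_mass_def)
  also have "(\<Prod>i<l. channel_mass pB1 pB2 pC (a ! i)) = 1"
    using mass by (intro prod.neutral) simp
  finally show ?thesis by simp
qed

lemma sum_seq_pmf_diag_marginal:
  fixes pB1 :: "'a \<Rightarrow> 'b1::finite \<Rightarrow> real" and pB2 :: "'a \<Rightarrow> 'b2::finite \<Rightarrow> real"
    and pC :: "'b1 \<Rightarrow> 'b2 \<Rightarrow> 'c::finite \<Rightarrow> real"
  assumes mass: "\<And>i. i < l \<Longrightarrow> channel_mass pB1 pB2 pC (a ! i) = 1"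
    and j: "j < l"
  shows "(\<Sum>b1\<in>seqs l. \<Sum>b2\<in>seqs l. \<Sum>c\<in>seqs l. seq_pmf l Mu PM u pB1 pB2 pC a a b1 b2 c *
            (if b1 ! j = y1 \<and> b2 ! j = y2 \<and> c ! j = z then 1 else 0))
       = diag_weight Mu PM u a * (pB1 (a ! j) y1 * pB2 (a ! j) y2 * pC y1 y2 z)"
  using sum_seqs3_prod_marginal[where F = "\<lambda>i v w t. pB1 (a ! i) v * pB2 (a ! i) w * pC v w t",
      OF mass[unfolded channel_mass_def] j, of y1 y2 z]
  by (simp add: seq_pmf_diag sum_distrib_left[symmetric] mult.assoc)

lemma sum_seq_pmf_diag_uniform_index:
  fixes pA :: "'a \<Rightarrow> real" and pB1 :: "'a \<Rightarrow> 'b1::finite \<Rightarrow> real"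
    and pB2 :: "'a \<Rightarrow> 'b2::finite \<Rightarrow> real" and pC :: "'b1 \<Rightarrow> 'b2 \<Rightarrow> 'c::finite \<Rightarrow> real"
  assumes l_pos: "l \<ge> 1" and a_type: "has_type l pA a"
    and mass: "\<And>i. i < l \<Longrightarrow> channel_mass pB1 pB2 pC (a ! i) = 1"
  shows "(\<Sum>b1\<in>seqs l. \<Sum>b2\<in>seqs l. \<Sum>c\<in>seqs l. \<Sum>I\<in>{1..l}.
            1 / real l * seq_pmf l Mu PM u pB1 pB2 pC a a b1 b2 c *
            (if a ! (I - 1) = x \<and> b1 ! (I - 1) = y1 \<and> b2 ! (I - 1) = y2 \<and> c ! (I - 1) = z
             then 1 else 0))
       = diag_weight Mu PM u a * pA x * (pB1 x y1 * pB2 x y2 * pC y1 y2 z)"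
  (is "?lhs = _ * _ * ?q")
proof -
  let ?W = "diag_weight Mu PM u a"
  have shift: "{1..l} = Suc ` {..<l}"
    by (simp add: lessThan_atLeast0 image_Suc_atLeastLessThan atLeastLessThanSuc_atLeastAtMost)
  let ?ind = "\<lambda>j b1 b2 c. if b1 ! j = y1 \<and> b2 ! j = y2 \<and> c ! j = z then 1 else 0"
  have "?lhs = (\<Sum>b1\<in>seqs l. \<Sum>b2\<in>seqs l. \<Sum>c\<in>seqs l. \<Sum>j<l.
      1 / real l * (if a ! j = x then 1 else 0) * (seq_pmf l Mu PM u pB1 pB2 pC a a b1 b2 c * ?ind j b1 b2 c))"
    unfolding shift by (simp add: sum.reindex) (intro sum.cong refl; auto)
  also have "\<dots> = (\<Sum>j<l. \<Sum>b1\<in>seqs l. \<Sum>b2\<in>seqs l. \<Sum>c\<in>seqs l.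
      1 / real l * (if a ! j = x then 1 else 0) * (seq_pmf l Mu PM u pB1 pB2 pC a a b1 b2 c * ?ind j b1 b2 c))"
    by (simp only: sum.swap[where B = "{..<l}"])
  also have "\<dots> = (\<Sum>j<l. 1 / real l * ?W * (if a ! j = x then ?q else 0))"
  proof (rule sum.cong[OF refl])
    fix j assume "j \<in> {..<l}"
    then have "(\<Sum>b1\<in>seqs l. \<Sum>b2\<in>seqs l. \<Sum>c\<in>seqs l.
        seq_pmf l Mu PM u pB1 pB2 pC a a b1 b2 c * ?ind j b1 b2 c) = ?W * (pB1 (a ! j) y1 * pB2 (a ! j) y2 * pC y1 y2 z)"
      by (simp add: sum_seq_pmf_diag_marginal[OF mass])
    then show "(\<Sum>b1\<in>seqs l. \<Sum>b2\<in>seqs l. \<Sum>c\<in>seqs l.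
        1 / real l * (if a ! j = x then 1 else 0) * (seq_pmf l Mu PM u pB1 pB2 pC a a b1 b2 c * ?ind j b1 b2 c))
      = 1 / real l * ?W * (if a ! j = x then ?q else 0)"
      by (simp only: sum_distrib_left[symmetric]) simp
  qed
  also have "\<dots> = 1 / real l * ?W * (\<Sum>j<l. if a ! j = x then ?q else 0)"
    by (simp only: sum_distrib_left)
  also have "(\<Sum>j<l. if a ! j = x then ?q else 0) = real (card {j. j < l \<and> a ! j = x}) * ?q"
    by (subst sum.inter_filter[symmetric]) simp_all
  also have "1 / real l * ?W * (real (card {j. j < l \<and> a ! j = x}) * ?q) = ?W * pA x * ?q"
    using has_type_count[OF a_type, of x] l_pos by simp
  finally show ?thesis .
qed

lemma prob_eq_seq_pmf:
  fixes pB1 :: "'a::finite \<Rightarrow> 'b1::finite \<Rightarrow> real" and pB2 :: "'a \<Rightarrow> 'b2::finite \<Rightarrow> real"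
    and pC :: "'b1 \<Rightarrow> 'b2 \<Rightarrow> 'c::finite \<Rightarrow> real"
  assumes mass: "\<And>a i. diag_weight Mu PM u a \<noteq> 0 \<Longrightarrow> i < l \<Longrightarrow> channel_mass pB1 pB2 pC (a ! i) = 1"
  shows "prob_eq l (seq_pmf l Mu PM u pB1 pB2 pC) = (\<Sum>a\<in>seqs l. diag_weight Mu PM u a)"
proof -
  let ?p = "seq_pmf l Mu PM u pB1 pB2 pC" and ?W = "diag_weight Mu PM u"
  have "(\<Sum>b1\<in>seqs l. \<Sum>b2\<in>seqs l. \<Sum>c\<in>seqs l. if a1 = a2 then ?p a1 a2 b1 b2 c else 0)
      = (if a1 = a2 then ?W a1 else 0)" for a1 a2
  proof (cases "a1 = a2 \<and> ?W a1 \<noteq> 0")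
    case True
    then have W: "?W a1 \<noteq> 0" and "a2 = a1" by auto
    then show ?thesis by (simp add: sum_seq_pmf_diag[OF mass[OF W]])
  qed (auto simp: seq_pmf_diag)
  then show ?thesis unfolding prob_eq_def by (simp add: finite_seqs)
qed

lemma prob_joint_eq_seq_pmf:
  fixes pB1 :: "'a::finite \<Rightarrow> 'b1::finite \<Rightarrow> real" and pB2 :: "'a \<Rightarrow> 'b2::finite \<Rightarrow> real"
    and pC :: "'b1 \<Rightarrow> 'b2 \<Rightarrow> 'c::finite \<Rightarrow> real"
    and pA :: "'a \<Rightarrow> real"
  assumes l_pos: "l \<ge> 1"
    and typed: "\<And>a. diag_weight Mu PM u a \<noteq> 0 \<Longrightarrow> has_type l pA a"
    and mass: "\<And>a i. diag_weight Mu PM u a \<noteq> 0 \<Longrightarrow> i < l \<Longrightarrow> channel_mass pB1 pB2 pC (a ! i) = 1"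
  shows "prob_joint_eq l (seq_pmf l Mu PM u pB1 pB2 pC) x y1 y2 z
       = (\<Sum>a\<in>seqs l. diag_weight Mu PM u a) * pA x * (pB1 x y1 * pB2 x y2 * pC y1 y2 z)"
proof -
  let ?p = "seq_pmf l Mu PM u pB1 pB2 pC" and ?W = "diag_weight Mu PM u"
  let ?q = "pB1 x y1 * pB2 x y2 * pC y1 y2 z"
  have "(\<Sum>b1\<in>seqs l. \<Sum>b2\<in>seqs l. \<Sum>c\<in>seqs l. \<Sum>I\<in>{1..l}. 1 / real l * ?p a1 a2 b1 b2 c *
        (if a1 ! (I - 1) = x \<and> a2 ! (I - 1) = x \<and> b1 ! (I - 1) = y1 \<and>
            b2 ! (I - 1) = y2 \<and> c ! (I - 1) = z \<and> a1 = a2 then 1 else 0))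
      = (if a1 = a2 then ?W a1 * pA x * ?q else 0)" for a1 a2
  proof (cases "a1 = a2 \<and> ?W a1 \<noteq> 0")
    case True
    then have W: "?W a1 \<noteq> 0" and "a2 = a1" by auto
    have "(\<Sum>b1\<in>seqs l. \<Sum>b2\<in>seqs l. \<Sum>c\<in>seqs l. \<Sum>I\<in>{1..l}. 1 / real l * ?p a1 a1 b1 b2 c *
        (if a1 ! (I - 1) = x \<and> b1 ! (I - 1) = y1 \<and> b2 ! (I - 1) = y2 \<and> c ! (I - 1) = z then 1 else 0))
      = ?W a1 * pA x * ?q"
      by (rule sum_seq_pmf_diag_uniform_index[OF l_pos typed[OF W] mass[OF W]])
    then show ?thesis using \<open>a2 = a1\<close> by simp
  qed (auto simp: seq_pmf_diag)
  then show ?thesis unfolding prob_joint_eq_def by (simp add: finite_seqs sum_distrib_right)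
qed

theorem lemma7:
  fixes l Mu :: nat
    and pA :: "'a::finite \<Rightarrow> real"
    and pB1 :: "'a \<Rightarrow> 'b1::finite \<Rightarrow> real"
    and pB2 :: "'a \<Rightarrow> 'b2::finite \<Rightarrow> real"
    and pC :: "'b1 \<Rightarrow> 'b2 \<Rightarrow> 'c::finite \<Rightarrow> real"
    and u :: "nat \<Rightarrow> 'a list"
    and PM :: "nat \<Rightarrow> nat \<Rightarrow> real"
    and x :: 'a and y1 :: 'b1 and y2 :: 'b2 and z :: 'c
  assumes l_pos: "l \<ge> 1"
    and pA_nonneg: "\<forall>a. pA a \<ge> 0" and pA_sum: "(\<Sum>a\<in>UNIV. pA a) = 1"
    and pB1_nonneg: "\<forall>a b. pB1 a b \<ge> 0"
    and pB1_sum: "\<forall>a. pA a > 0 \<longrightarrow> (\<Sum>b\<in>UNIV. pB1 a b) = 1"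
    and pB2_nonneg: "\<forall>a b. pB2 a b \<ge> 0"
    and pB2_sum: "\<forall>a. pA a > 0 \<longrightarrow> (\<Sum>b\<in>UNIV. pB2 a b) = 1"
    and pC_nonneg: "\<forall>b1 b2 c. pC b1 b2 c \<ge> 0"
    and pC_sum: "\<forall>b1 b2. (\<Sum>a\<in>UNIV. pA a * pB1 a b1 * pB2 a b2) > 0
                   \<longrightarrow> (\<Sum>c\<in>UNIV. pC b1 b2 c) = 1"
    and pA_type: "is_type l pA"
    and u_type: "\<forall>m\<in>{1..Mu}. has_type l pA (u m)"
    and PM_nonneg: "\<forall>m1\<in>{1..Mu}. \<forall>m2\<in>{1..Mu}. PM m1 m2 \<ge> 0"
    and PM_sum: "(\<Sum>m1\<in>{1..Mu}. \<Sum>m2\<in>{1..Mu}. PM m1 m2) = 1"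
    and pos: "prob_eq l (seq_pmf l Mu PM u pB1 pB2 pC) > 0"
  shows "prob_joint_eq l (seq_pmf l Mu PM u pB1 pB2 pC) x y1 y2 z
           / prob_eq l (seq_pmf l Mu PM u pB1 pB2 pC)
         = pA x * pB1 x y1 * pB2 x y2 * pC y1 y2 z"
proof -
  let ?p = "seq_pmf l Mu PM u pB1 pB2 pC" and ?W = "diag_weight Mu PM u"
  let ?q = "pB1 x y1 * pB2 x y2 * pC y1 y2 z"
  have typed: "has_type l pA a" if "?W a \<noteq> 0" for a
    using diag_weight_nonzero_codeword[OF that] u_type by metis
  have mass: "channel_mass pB1 pB2 pC (a ! i) = 1" if "?W a \<noteq> 0" and "i < l" for a i
    by (rule channel_mass_eq_one[OF pA_nonneg pB1_nonneg pB1_sum pB2_nonneg pB2_sum pC_sum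
          has_type_letter_pos[OF typed[OF that(1)] that(2)]])
  have "prob_eq l ?p = (\<Sum>a\<in>seqs l. ?W a)"
    by (rule prob_eq_seq_pmf[OF mass])
  moreover have "prob_joint_eq l ?p x y1 y2 z = (\<Sum>a\<in>seqs l. ?W a) * pA x * ?q"
    by (rule prob_joint_eq_seq_pmf[OF l_pos typed mass])
  ultimately show ?thesis using pos by (simp add: mult.assoc)
qed

end
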